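(* Let $p\in\mathcal M_1^+$. If $\limsup_{k\to\infty}\sqrt[k]{p_k}<1$, then all coefficients $a(p)_k=\frac{1}{k+1}\sum_{\ell\ge k}\binom{\ell}{k}p_\ell$ are finite and $a(p)\in X_{\alpha,\delta}$ with $\alpha=a(p)_1=\frac12 m=\frac12\sum_{k\ge0}k\,p_k$ and some $\delta$. Conversely, if $a(p)\in X_{\alpha,\delta}$ for some $\alpha,\delta$, then $\limsup_{k\to\infty}\sqrt[k]{p_k}<1$.
   Context: $\mathcal M_1^+$ is the set of probability measures on $\mathbb N_0$, identified with nonnegative sequences summing to $1$. For $0<\alpha\le\delta<\infty$, $X_{\alpha,\delta}$ is the set of real sequences $a=(a_k)_{k\ge0}$ with $a_0=1$, $a_1=\alpha$, $0\le a_k\le\delta^k$ for $k\ge2$. *)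

theory Defs
  imports "HOL-Analysis.Analysis"
begin

definition prob_seq :: "(nat \<Rightarrow> real) \<Rightarrow> bool" where
  "prob_seq p \<longleftrightarrow> (\<forall>k. 0 \<le> p k) \<and> p sums 1"

text \<open>The series defining a(p)_k, reindexed: sum over l >= k of (l choose k) p_l.\<close>
definition a_series :: "(nat \<Rightarrow> real) \<Rightarrow> nat \<Rightarrow> nat \<Rightarrow> real" where
  "a_series p k = (\<lambda>j. real ((j + k) choose k) * p (j + k))"

definition a_finite :: "(nat \<Rightarrow> real) \<Rightarrow> bool" where
  "a_finite p \<longleftrightarrow> (\<forall>k. summable (a_series p k))"

definition a_coeff :: "(nat \<Rightarrow> real) \<Rightarrow> nat \<Rightarrow> real" where
  "a_coeff p k = suminf (a_series p k) / real (k + 1)"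

definition in_X :: "real \<Rightarrow> real \<Rightarrow> (nat \<Rightarrow> real) \<Rightarrow> bool" where
  "in_X \<alpha> \<delta> a \<longleftrightarrow> 0 < \<alpha> \<and> \<alpha> \<le> \<delta> \<and> a 0 = 1 \<and> a 1 = \<alpha> \<and>
     (\<forall>k\<ge>2. 0 \<le> a k \<and> a k \<le> \<delta> ^ k)"

end

theory Submission
  imports Defs
begin

text \<open>Both directions pass through an exponential bound \<open>p_l \<le> C r^l\<close> with \<open>r < 1\<close>, which is
  equivalent to \<open>limsup root l p_l < 1\<close>. Given such a bound, the terms \<open>(l choose k) p_l\<close> of the
  series for \<open>a(p)_k\<close> are dominated by \<open>C D^k q^(l-k)\<close> with \<open>q < 1\<close>, so all series converge and
  \<open>a(p)_k \<le> M D^k\<close>, which is absorbed into \<open>\<delta>^k\<close> for \<open>k \<ge> 2\<close>. Conversely \<open>a(p)_k \<le> \<delta>^k\<close> bounds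
  every single term \<open>(l choose k) p_l \<le> (k + 1) \<delta>^k\<close>; taking \<open>k\<close> proportional to \<open>l\<close> with a large
  enough ratio \<open>l/k \<ge> 4\<delta>\<close> makes \<open>p_l\<close> exponentially small.\<close>

lemma exponential_bound_of_limsup_root_less_one:
  fixes p :: "nat \<Rightarrow> real"
  assumes lim: "limsup (\<lambda>k. ereal (root k (p k))) < 1" and nonneg: "\<And>k. 0 \<le> p k"
  obtains r C where "0 < r" "r < 1" "1 \<le> C" "\<And>k. p k \<le> C * r ^ k"
proof -
  obtain r0 where r0: "limsup (\<lambda>k. ereal (root k (p k))) < ereal r0" "r0 < 1"
    using ereal_dense2[OF lim] by auto
  define r where "r = max r0 (1 / 2)"
  have r: "0 < r" "r < 1" using r0 unfolding r_def by auto
  have "limsup (\<lambda>k. ereal (root k (p k))) < ereal r"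
    using r0(1) unfolding r_def by (rule order.strict_trans2) simp
  then have "\<forall>\<^sub>F k in sequentially. ereal (root k (p k)) < ereal r"
    by (rule Limsup_lessD)
  then obtain K where K: "\<And>k. k \<ge> K \<Longrightarrow> root k (p k) < r"
    unfolding eventually_sequentially by auto
  define C where "C = 1 + (\<Sum>k\<le>K. p k / r ^ k)"
  have quot_le_C: "p k / r ^ k \<le> C" if "k \<le> K" for k
    using member_le_sum[of k "{..K}" "\<lambda>k. p k / r ^ k"] that nonneg r
    unfolding C_def by force
  have "1 \<le> C" using nonneg r unfolding C_def by (auto intro: sum_nonneg)
  moreover have "p k \<le> C * r ^ k" for k
  proof (cases "k \<le> K")
    case True
    then show ?thesis using quot_le_C[OF True] r by (simp add: divide_le_eq)
  next
    case False
    then have "0 < k" "root k (p k) < r" using K by auto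
    then have "p k \<le> r ^ k"
      using nonneg real_root_pow_pos2 power_mono real_root_ge_zero
      by (metis less_imp_le)
    also have "\<dots> \<le> C * r ^ k" using \<open>1 \<le> C\<close> r by simp
    finally show ?thesis .
  qed
  ultimately show ?thesis using that r by blast
qed

lemma limsup_root_less_one_of_exponential_bound:
  fixes p :: "nat \<Rightarrow> real"
  assumes "\<And>k. 0 \<le> p k" "\<And>k. p k \<le> C * r ^ k" "0 < C" "0 < r" "r < 1"
  shows "limsup (\<lambda>k. ereal (root k (p k))) < 1"
proof -
  have "\<forall>\<^sub>F k in sequentially. ereal (root k (p k)) \<le> ereal (root k C * r)"
    unfolding eventually_sequentially
  proof (intro exI[of _ 1] allI impI)
    fix k :: nat assume "1 \<le> k"
    then have "root k (p k) \<le> root k (C * r ^ k)" using assms(2) by simp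
    also have "\<dots> = root k C * r"
      using \<open>1 \<le> k\<close> \<open>0 < r\<close> by (simp add: real_root_mult real_root_power_cancel)
    finally show "ereal (root k (p k)) \<le> ereal (root k C * r)" by simp
  qed
  then have "limsup (\<lambda>k. ereal (root k (p k))) \<le> limsup (\<lambda>k. ereal (root k C * r))"
    by (rule Limsup_mono)
  also have "(\<lambda>k. ereal (root k C * r)) \<longlonglongrightarrow> ereal (1 * r)"
    using LIMSEQ_root_const[OF \<open>0 < C\<close>] by (intro tendsto_ereal tendsto_mult tendsto_const)
  then have "limsup (\<lambda>k. ereal (root k C * r)) = ereal r"
    by (simp add: lim_imp_Limsup)
  finally show ?thesis using \<open>r < 1\<close> by (simp add: le_less_trans)
qed

lemma binomial_term_le_one:
  fixes s t :: real
  assumes "0 \<le> s" "0 \<le> t" "s + t = 1"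
  shows "real ((j + k) choose k) * s ^ k * t ^ j \<le> 1"
proof -
  have "real ((j + k) choose k) * s ^ k * t ^ (j + k - k)
      \<le> (\<Sum>i\<le>j + k. real ((j + k) choose i) * s ^ i * t ^ (j + k - i))"
    by (rule member_le_sum) (use assms in auto)
  also have "\<dots> = (s + t) ^ (j + k)" by (rule binomial_ring[symmetric])
  finally show ?thesis using assms(3) by simp
qed

lemma a_series_nonneg: "(\<And>l. 0 \<le> p l) \<Longrightarrow> 0 \<le> a_series p k j"
  unfolding a_series_def by simp

text \<open>Split \<open>r = (1 - r)/2 + (1 + r)/2\<close>; after factoring out the binomial term of
  \<open>1 = ((1 - r)/2 + (1 + r)/2)^(j+k)\<close>, what remains of \<open>r^(j+k)\<close> is geometric in both \<open>k\<close> and \<open>j\<close>.\<close>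
lemma a_series_le_geometric:
  fixes p :: "nat \<Rightarrow> real"
  assumes bound: "\<And>l. p l \<le> C * r ^ l" and "0 \<le> C" "0 < r" "r < 1"
  shows "a_series p k j \<le> C * (2 * r / (1 - r)) ^ k * (2 * r / (1 + r)) ^ j"
proof -
  define s t where "s = (1 - r) / 2" and "t = (1 + r) / 2"
  have st: "0 < s" "0 < t" "s + t = 1" using assms unfolding s_def t_def by (auto simp: field_simps)
  have "a_series p k j \<le> real ((j + k) choose k) * (C * r ^ (j + k))"
    unfolding a_series_def by (intro mult_left_mono bound) auto
  also have "\<dots> = (C * (r / s) ^ k * (r / t) ^ j) * (real ((j + k) choose k) * s ^ k * t ^ j)"
    using st by (simp add: power_add power_divide field_simps)
  also have "\<dots> \<le> C * (r / s) ^ k * (r / t) ^ j"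
    using binomial_term_le_one[of s t j k] st assms by (intro mult_left_le) auto
  finally show ?thesis unfolding s_def t_def by (simp add: mult.commute)
qed

lemma
  fixes p :: "nat \<Rightarrow> real"
  assumes "\<And>l. 0 \<le> p l" "\<And>l. p l \<le> C * r ^ l" "0 \<le> C" "0 < r" "r < 1"
  shows summable_a_series_of_exponential_bound: "summable (a_series p k)"
    and suminf_a_series_le: "suminf (a_series p k) \<le> C * (1 + r) / (1 - r) * (2 * r / (1 - r)) ^ k"
proof -
  define q where "q = 2 * r / (1 + r)"
  have q: "0 \<le> q" "q < 1" using assms unfolding q_def by (auto simp: field_simps)
  have geometric: "summable (\<lambda>j. C * (2 * r / (1 - r)) ^ k * q ^ j)"
    using q by (intro summable_mult summable_geometric) auto
  have le: "a_series p k j \<le> C * (2 * r / (1 - r)) ^ k * q ^ j" for j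
    unfolding q_def using a_series_le_geometric assms(2-) .
  show summable: "summable (a_series p k)"
    by (rule summable_comparison_test'[OF geometric]) (use a_series_nonneg[OF assms(1)] le in auto)
  have "suminf (a_series p k) \<le> (\<Sum>j. C * (2 * r / (1 - r)) ^ k * q ^ j)"
    by (rule suminf_le[OF le summable geometric])
  also have "\<dots> = C * (2 * r / (1 - r)) ^ k / (1 - q)"
    using q by (simp add: suminf_mult suminf_geometric)
  also have "1 - q = (1 - r) / (1 + r)" using assms unfolding q_def by (simp add: field_simps)
  finally show "suminf (a_series p k) \<le> C * (1 + r) / (1 - r) * (2 * r / (1 - r)) ^ k"
    by (simp add: field_simps)
qed

lemma a_coeff_zero: "p sums 1 \<Longrightarrow> a_coeff p 0 = 1"
  unfolding a_coeff_def a_series_def by (simp add: sums_iff)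

lemma a_series_one: "a_series p 1 = (\<lambda>j. real (Suc j) * p (Suc j))"
  unfolding a_series_def by simp

lemma a_coeff_one:
  assumes "summable (a_series p 1)"
  shows "a_coeff p 1 = (\<Sum>k. real k * p k) / 2"
proof -
  have "summable (\<lambda>k. real k * p k)"
    using assms unfolding a_series_one by (subst summable_Suc_iff[symmetric]) simp
  from suminf_split_head[OF this] show ?thesis
    unfolding a_coeff_def a_series_one by simp
qed

lemma a_coeff_one_pos:
  assumes "\<And>l. 0 \<le> p l" "summable (a_series p 1)" "1 \<le> k" "p k \<noteq> 0"
  shows "0 < a_coeff p 1"
proof -
  have "0 < a_series p 1 (k - 1)"
    using assms unfolding a_series_one by (simp add: order_le_neq_trans)
  then show ?thesis
    unfolding a_coeff_def using suminf_pos2[OF assms(2) a_series_nonneg[OF assms(1)]] by simp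
qed

lemma a_coeff_in_X_of_limsup_root_less_one:
  fixes p :: "nat \<Rightarrow> real"
  assumes "prob_seq p" "limsup (\<lambda>k. ereal (root k (p k))) < 1" "1 \<le> k" "p k \<noteq> 0"
  shows "a_finite p" "\<exists>\<delta>. in_X (a_coeff p 1) \<delta> (a_coeff p)"
proof -
  have nonneg: "\<And>l. 0 \<le> p l" and sums: "p sums 1" using assms(1) unfolding prob_seq_def by auto
  obtain r C where r: "0 < r" "r < 1" and C: "1 \<le> C" and bound: "\<And>l. p l \<le> C * r ^ l"
    using exponential_bound_of_limsup_root_less_one[OF assms(2) nonneg] by blast
  note exp_bound = nonneg bound order.trans[OF zero_le_one C] r
  have summable: "\<And>k. summable (a_series p k)"
    using summable_a_series_of_exponential_bound[OF exp_bound] .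
  then show "a_finite p" unfolding a_finite_def ..
  define M D where "M = C * (1 + r) / (1 - r)" and "D = 2 * r / (1 - r)"
  have M: "1 \<le> M" and D: "0 \<le> D" using C r unfolding M_def D_def by (auto simp: field_simps intro: add_increasing2)
  define \<delta> where "\<delta> = max (a_coeff p 1) (M * D)"
  have "0 \<le> a_coeff p k \<and> a_coeff p k \<le> \<delta> ^ k" if "2 \<le> k" for k
  proof -
    have sum_nonneg: "0 \<le> suminf (a_series p k)"
      by (rule suminf_nonneg[OF summable a_series_nonneg[OF nonneg]])
    have "a_coeff p k \<le> suminf (a_series p k)"
      unfolding a_coeff_def using sum_nonneg by (simp add: divide_le_eq algebra_simps)
    also have "\<dots> \<le> M * D ^ k"
      using suminf_a_series_le[OF exp_bound] unfolding M_def D_def .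
    also have "\<dots> \<le> M ^ k * D ^ k"
      using M D that by (intro mult_right_mono) (auto intro: order.trans[OF _ power_increasing[of 1 k M]])
    also have "\<dots> \<le> \<delta> ^ k"
      unfolding \<delta>_def power_mult_distrib[symmetric] using M D by (intro power_mono) auto
    finally show ?thesis using sum_nonneg unfolding a_coeff_def by simp
  qed
  then have "in_X (a_coeff p 1) \<delta> (a_coeff p)"
    unfolding in_X_def \<delta>_def
    using a_coeff_zero[OF sums] a_coeff_one_pos[OF nonneg summable assms(3,4)] by auto
  then show "\<exists>\<delta>. in_X (a_coeff p 1) \<delta> (a_coeff p)" ..
qed

lemma choose_mult_le_a_coeff:
  assumes "\<And>l. 0 \<le> p l" "summable (a_series p k)" "k \<le> l"
  shows "real (l choose k) * p l \<le> real (k + 1) * a_coeff p k"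
proof -
  have "real (l choose k) * p l = a_series p k (l - k)"
    unfolding a_series_def using assms(3) by simp
  also have "\<dots> \<le> suminf (a_series p k)"
    using sum_le_suminf[OF assms(2), of "{l - k}"] a_series_nonneg[OF assms(1)] by simp
  finally show ?thesis unfolding a_coeff_def by simp
qed

lemma in_X_le_power:
  assumes "in_X \<alpha> \<delta> a"
  shows "a k \<le> \<delta> ^ k"
proof -
  consider "k = 0" | "k = 1" | "k \<ge> 2" by linarith
  then show ?thesis using assms unfolding in_X_def by cases auto
qed

text \<open>With \<open>k = l div N\<close>, comparing the single term \<open>(l choose k) p_l\<close> with \<open>(k + 1) a(p)_k\<close>
  and using \<open>(l choose k) \<ge> (l/k)^k \<ge> N^k \<ge> (4 \<delta>)^k\<close> gives \<open>p_l \<le> (k + 1) 4^-k \<le> 2^-k\<close>.\<close>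
lemma exponential_bound_of_a_coeff_le_power:
  fixes p :: "nat \<Rightarrow> real"
  assumes nonneg: "\<And>l. 0 \<le> p l" and "a_finite p" and a_le: "\<And>k. a_coeff p k \<le> \<delta> ^ k"
    and "0 < \<delta>" "4 * \<delta> \<le> real N" "1 \<le> N"
  shows "p l \<le> 2 * root N (1 / 2) ^ l"
proof -
  define k where "k = l div N"
  have "k \<le> l" "k * N \<le> l" unfolding k_def by simp_all
  have "l < N * (k + 1)"
  proof -
    have "l = N * k + l mod N" unfolding k_def by simp
    moreover have "l mod N < N" using \<open>1 \<le> N\<close> by simp
    ultimately show ?thesis by (simp add: algebra_simps)
  qed
  have "real N ^ k \<le> real (l choose k)"
  proof (cases "k = 0")
    case False
    have "real N \<le> real l / real k"
      using \<open>k * N \<le> l\<close> False by (simp add: field_simps flip: of_nat_mult)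
    then have "real N ^ k \<le> (real l / real k) ^ k" by (intro power_mono) auto
    also have "\<dots> \<le> real (l choose k)" by (rule binomial_ge_n_over_k_pow_k[OF \<open>k \<le> l\<close>])
    finally show ?thesis .
  qed simp
  then have "real N ^ k * p l \<le> real (l choose k) * p l" using nonneg by (rule mult_right_mono)
  also have "\<dots> \<le> real (k + 1) * \<delta> ^ k"
    using choose_mult_le_a_coeff[OF nonneg _ \<open>k \<le> l\<close>] a_le \<open>a_finite p\<close>
    unfolding a_finite_def by (force intro: order.trans mult_left_mono)
  also have "\<dots> \<le> real (k + 1) * (real N / 4) ^ k"
    using assms(4,5) by (intro mult_left_mono power_mono) auto
  also have "\<dots> = real N ^ k * (real (k + 1) * (1 / 4) ^ k)" by (simp add: power_divide)
  finally have "p l \<le> real (k + 1) * (1 / 4) ^ k" using \<open>1 \<le> N\<close> by simp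
  also have "\<dots> = (real (k + 1) / 2 ^ k) * (1 / 2) ^ k"
    by (simp add: power_divide flip: power_mult_distrib)
  also have "\<dots> \<le> (1 / 2) ^ k"
  proof -
    have "Suc k \<le> 2 ^ k" by (rule Suc_leI[OF less_exp])
    then have "real (k + 1) \<le> 2 ^ k" by (metis Suc_eq_plus1 of_nat_le_iff of_nat_numeral of_nat_power)
    then show ?thesis by (intro mult_left_le_one_le) auto
  qed
  also have "\<dots> = 2 * (root N (1 / 2) ^ N) ^ (k + 1)"
    using \<open>1 \<le> N\<close> by (simp add: real_root_pow_pos2)
  also have "\<dots> \<le> 2 * root N (1 / 2) ^ l"
    unfolding power_mult[symmetric] using \<open>1 \<le> N\<close> \<open>l < N * (k + 1)\<close>
    by (intro mult_left_mono power_decreasing) auto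
  finally show ?thesis .
qed

lemma limsup_root_less_one_of_in_X:
  fixes p :: "nat \<Rightarrow> real"
  assumes "\<And>l. 0 \<le> p l" "a_finite p" "in_X \<alpha> \<delta> (a_coeff p)"
  shows "limsup (\<lambda>k. ereal (root k (p k))) < 1"
proof -
  define N where "N = nat \<lceil>4 * \<delta>\<rceil> + 1"
  have N: "1 \<le> N" "4 * \<delta> \<le> real N" unfolding N_def by linarith+
  have "0 < \<delta>" using assms(3) unfolding in_X_def by auto
  have "p l \<le> 2 * root N (1 / 2) ^ l" for l
    using exponential_bound_of_a_coeff_le_power[OF assms(1,2) in_X_le_power[OF assms(3)] \<open>0 < \<delta>\<close> N(2,1)] .
  then show ?thesis
    using N(1) by (intro limsup_root_less_one_of_exponential_bound[OF assms(1)]) auto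
qed

theorem proposition6:
  fixes p :: "nat \<Rightarrow> real"
  assumes "prob_seq p"
  shows "(limsup (\<lambda>k. ereal (root k (p k))) < 1 \<and> (\<exists>k\<ge>1. p k \<noteq> 0)
            \<longrightarrow> a_finite p
                \<and> a_coeff p 1 = (\<Sum>k. real k * p k) / 2
                \<and> (\<exists>\<delta>. in_X ((\<Sum>k. real k * p k) / 2) \<delta> (a_coeff p)))
       \<and> ((\<exists>\<alpha> \<delta>. a_finite p \<and> in_X \<alpha> \<delta> (a_coeff p))
            \<longrightarrow> limsup (\<lambda>k. ereal (root k (p k))) < 1)"
proof -
  have nonneg: "\<And>l. 0 \<le> p l" using assms unfolding prob_seq_def by blast
  have "a_finite p \<and> a_coeff p 1 = (\<Sum>k. real k * p k) / 2
          \<and> (\<exists>\<delta>. in_X ((\<Sum>k. real k * p k) / 2) \<delta> (a_coeff p))"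
    if "limsup (\<lambda>k. ereal (root k (p k))) < 1" "1 \<le> k" "p k \<noteq> 0" for k
  proof -
    have finite: "a_finite p" and X: "\<exists>\<delta>. in_X (a_coeff p 1) \<delta> (a_coeff p)"
      using a_coeff_in_X_of_limsup_root_less_one[OF assms that] by auto
    have a1: "a_coeff p 1 = (\<Sum>k. real k * p k) / 2"
      using finite unfolding a_finite_def by (intro a_coeff_one) blast
    show ?thesis using finite a1 X[unfolded a1] by blast
  qed
  moreover have "limsup (\<lambda>k. ereal (root k (p k))) < 1"
    if "a_finite p" "in_X \<alpha> \<delta> (a_coeff p)" for \<alpha> \<delta>
    using limsup_root_less_one_of_in_X[OF nonneg that] .
  ultimately show ?thesis by blast
qed

end
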